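(* Let $k_1,k_2,m$ be positive integers and $\phi_1\in J_{k_1,m}$, $\phi_2\in J_{k_2,m}$ (classical Jacobi forms). Define $$H(\phi_1,\phi_2)(\tau,z_1,z_2)=\sum_{\epsilon\in\mathcal O_K^\times}\Bigl(\phi_1\bigl(\tau,\tfrac12(z_1+z_2)\bigr)\,\phi_2\bigl(\tau,\tfrac i2(z_1-z_2)\bigr)\Bigr)\Big|_{k_1+k_2}\epsilon I.$$ Then $H(\phi_1,\phi_2)\in J^1_{k_1+k_2,m}(\mathcal O_K)$. If moreover $\phi_1,\phi_2$ are cusp forms, then $H(\phi_1,\phi_2)$ is a cusp form.
   Context: Notation: $\mathcal H$ is the upper half plane, $e(x)=e^{2\pi i x}$, $K=\mathbb Q(i)$, $\mathcal O_K=\mathbb Z[i]$, $\mathcal O_K^\times=\{\pm1,\pm i\}$, $N(x)=x\bar x$, $\mathcal O_K^\sharp=\frac i2\mathcal O_K$. $J_{k,m}$ denotes the space of classical (Eichler–Zagier) Jacobi forms of weight $k$ and index $m$ on $SL(2,\mathbb Z)\ltimes\mathbb Z^2$. For a function $\psi$ on $\mathcal H\times\mathbb C^2$ and $\epsilon\in\mathcal O_K^\times$, $(\psi|_k\epsilon I)(\tau,z_1,z_2)=\epsilon^{-k}\psi(\tau,\epsilon z_1,\bar\epsilon z_2)$. For $M=\begin{pmatrix}a&b\\c&d\end{pmatrix}\in SL(2,\mathbb Z)$, $(\phi|_{k,m}M)(\tau,z_1,z_2)=(c\tau+d)^{-k}e^{-2\pi i m c z_1z_2/(c\tau+d)}\phi\bigl(M\tau,\tfrac{z_1}{c\tau+d},\tfrac{z_2}{c\tau+d}\bigr)$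 and for $\lambda,\mu\in\mathcal O_K$, $(\phi|_m[\lambda,\mu])(\tau,z_1,z_2)=e^{2\pi i m(N(\lambda)\tau+\bar\lambda z_1+\lambda z_2)}\phi(\tau,z_1+\lambda\tau+\mu,z_2+\bar\lambda\tau+\bar\mu)$. $J^1_{k,m}(\mathcal O_K)$ is the space of holomorphic $\phi:\mathcal H\times\mathbb C^2\to\mathbb C$ with $\phi|_{k,m}M=\phi$ for all $M\in SL(2,\mathbb Z)$, $\phi|_m[\lambda,\mu]=\phi$ for all $\lambda,\mu\in\mathcal O_K$, and with a Fourier expansion $\phi=\sum_{n\ge0}\sum_{r\in\mathcal O_K^\sharp,\,nm\ge N(r)}c_\phi(n,r)e(n\tau+rz_1+\bar rz_2)$; it is a cusp form if $c_\phi(n,r)=0$ whenever $nm=N(r)$. *)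

theory Defs
  imports "HOL-Analysis.Analysis"
begin

definition e :: "complex \<Rightarrow> complex" where
  "e x = exp (2 * of_real pi * \<i> * x)"

definition upper_half_plane :: "complex set" where
  "upper_half_plane = {\<tau>. Im \<tau> > 0}"

definition gauss_ints :: "complex set" where
  "gauss_ints = {z. Re z \<in> \<int> \<and> Im z \<in> \<int>}"

definition gauss_units :: "complex set" where
  "gauss_units = {1, -1, \<i>, -\<i>}"

definition OK_sharp :: "complex set" where
  "OK_sharp = (\<lambda>x. (\<i> / 2) * x) ` gauss_ints"

definition normK :: "complex \<Rightarrow> complex" where
  "normK x = x * cnj x"

definition holomorphic2 :: "(complex \<Rightarrow> complex \<Rightarrow> complex) \<Rightarrow> bool" where
  "holomorphic2 f \<longleftrightarrow>
     (\<forall>p \<in> upper_half_plane \<times> UNIV. \<exists>A B.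
        ((\<lambda>(t, z). f t z) has_derivative (\<lambda>(h1, h2). A * h1 + B * h2)) (at p))"

definition holomorphic3 :: "(complex \<Rightarrow> complex \<Rightarrow> complex \<Rightarrow> complex) \<Rightarrow> bool" where
  "holomorphic3 f \<longleftrightarrow>
     (\<forall>p \<in> upper_half_plane \<times> UNIV \<times> UNIV. \<exists>A B C.
        ((\<lambda>(t, z1, z2). f t z1 z2) has_derivative (\<lambda>(h1, h2, h3). A * h1 + B * h2 + C * h3)) (at p))"

definition slash_classical ::
  "nat \<Rightarrow> nat \<Rightarrow> int \<Rightarrow> int \<Rightarrow> int \<Rightarrow> int \<Rightarrow> (complex \<Rightarrow> complex \<Rightarrow> complex) \<Rightarrow> complex \<Rightarrow> complex \<Rightarrow> complex" where
  "slash_classical k m a b c d \<phi> \<tau> z =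
     inverse ((of_int c * \<tau> + of_int d) ^ k)
     * e (- of_nat m * of_int c * z ^ 2 / (of_int c * \<tau> + of_int d))
     * \<phi> ((of_int a * \<tau> + of_int b) / (of_int c * \<tau> + of_int d)) (z / (of_int c * \<tau> + of_int d))"

definition fourier_classical :: "nat \<Rightarrow> (nat \<times> int \<Rightarrow> complex) \<Rightarrow> (complex \<Rightarrow> complex \<Rightarrow> complex) \<Rightarrow> bool" where
  "fourier_classical m c \<phi> \<longleftrightarrow>
     (\<forall>\<tau> \<in> upper_half_plane. \<forall>z.
        ((\<lambda>(n, r). c (n, r) * e (of_nat n * \<tau> + of_int r * z)) has_sum \<phi> \<tau> z)
          {(n, r). r ^ 2 \<le> 4 * int n * int m})"

definition jacobi_form :: "nat \<Rightarrow> nat \<Rightarrow> (complex \<Rightarrow> complex \<Rightarrow> complex) \<Rightarrow> bool" where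
  "jacobi_form k m \<phi> \<longleftrightarrow>
     holomorphic2 \<phi>
     \<and> (\<forall>a b c d. a * d - b * c = 1 \<longrightarrow>
          (\<forall>\<tau> \<in> upper_half_plane. \<forall>z. slash_classical k m a b c d \<phi> \<tau> z = \<phi> \<tau> z))
     \<and> (\<forall>l u :: int. \<forall>\<tau> \<in> upper_half_plane. \<forall>z.
          e (of_nat m * (of_int (l ^ 2) * \<tau> + 2 * of_int l * z))
            * \<phi> \<tau> (z + of_int l * \<tau> + of_int u) = \<phi> \<tau> z)
     \<and> (\<exists>c. fourier_classical m c \<phi>)"

definition jacobi_cusp_form :: "nat \<Rightarrow> nat \<Rightarrow> (complex \<Rightarrow> complex \<Rightarrow> complex) \<Rightarrow> bool" where
  "jacobi_cusp_form k m \<phi> \<longleftrightarrow>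
     jacobi_form k m \<phi>
     \<and> (\<exists>c. fourier_classical m c \<phi> \<and> (\<forall>n r. 4 * int n * int m = r ^ 2 \<longrightarrow> c (n, r) = 0))"

definition slash_unit :: "nat \<Rightarrow> complex \<Rightarrow> (complex \<Rightarrow> complex \<Rightarrow> complex \<Rightarrow> complex) \<Rightarrow> complex \<Rightarrow> complex \<Rightarrow> complex \<Rightarrow> complex" where
  "slash_unit k \<epsilon> \<psi> \<tau> z1 z2 = inverse (\<epsilon> ^ k) * \<psi> \<tau> (\<epsilon> * z1) (cnj \<epsilon> * z2)"

definition slash_herm ::
  "nat \<Rightarrow> nat \<Rightarrow> int \<Rightarrow> int \<Rightarrow> int \<Rightarrow> int \<Rightarrow> (complex \<Rightarrow> complex \<Rightarrow> complex \<Rightarrow> complex) \<Rightarrow> complex \<Rightarrow> complex \<Rightarrow> complex \<Rightarrow> complex" where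
  "slash_herm k m a b c d \<phi> \<tau> z1 z2 =
     inverse ((of_int c * \<tau> + of_int d) ^ k)
     * e (- of_nat m * of_int c * z1 * z2 / (of_int c * \<tau> + of_int d))
     * \<phi> ((of_int a * \<tau> + of_int b) / (of_int c * \<tau> + of_int d))
         (z1 / (of_int c * \<tau> + of_int d)) (z2 / (of_int c * \<tau> + of_int d))"

definition fourier_herm :: "nat \<Rightarrow> (nat \<times> complex \<Rightarrow> complex) \<Rightarrow> (complex \<Rightarrow> complex \<Rightarrow> complex \<Rightarrow> complex) \<Rightarrow> bool" where
  "fourier_herm m c \<phi> \<longleftrightarrow>
     (\<forall>\<tau> \<in> upper_half_plane. \<forall>z1 z2.
        ((\<lambda>(n, r). c (n, r) * e (of_nat n * \<tau> + r * z1 + cnj r * z2)) has_sum \<phi> \<tau> z1 z2)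
          {(n, r). r \<in> OK_sharp \<and> Re (normK r) \<le> real (n * m)})"

definition herm_jacobi_form :: "nat \<Rightarrow> nat \<Rightarrow> (complex \<Rightarrow> complex \<Rightarrow> complex \<Rightarrow> complex) \<Rightarrow> bool" where
  "herm_jacobi_form k m \<phi> \<longleftrightarrow>
     holomorphic3 \<phi>
     \<and> (\<forall>a b c d. a * d - b * c = 1 \<longrightarrow>
          (\<forall>\<tau> \<in> upper_half_plane. \<forall>z1 z2. slash_herm k m a b c d \<phi> \<tau> z1 z2 = \<phi> \<tau> z1 z2))
     \<and> (\<forall>l \<in> gauss_ints. \<forall>u \<in> gauss_ints. \<forall>\<tau> \<in> upper_half_plane. \<forall>z1 z2.
          e (of_nat m * (normK l * \<tau> + cnj l * z1 + l * z2))
            * \<phi> \<tau> (z1 + l * \<tau> + u) (z2 + cnj l * \<tau> + cnj u) = \<phi> \<tau> z1 z2)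
     \<and> (\<exists>c. fourier_herm m c \<phi>)"

definition herm_jacobi_cusp_form :: "nat \<Rightarrow> nat \<Rightarrow> (complex \<Rightarrow> complex \<Rightarrow> complex \<Rightarrow> complex) \<Rightarrow> bool" where
  "herm_jacobi_cusp_form k m \<phi> \<longleftrightarrow>
     herm_jacobi_form k m \<phi>
     \<and> (\<exists>c. fourier_herm m c \<phi> \<and> (\<forall>n r. Re (normK r) = real (n * m) \<longrightarrow> c (n, r) = 0))"

definition H_lift :: "nat \<Rightarrow> (complex \<Rightarrow> complex \<Rightarrow> complex) \<Rightarrow> (complex \<Rightarrow> complex \<Rightarrow> complex)
    \<Rightarrow> complex \<Rightarrow> complex \<Rightarrow> complex \<Rightarrow> complex" where
  "H_lift k \<phi>1 \<phi>2 \<tau> z1 z2 =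
     (\<Sum>\<epsilon> \<in> gauss_units.
        slash_unit k \<epsilon> (\<lambda>t w1 w2. \<phi>1 t ((w1 + w2) / 2) * \<phi>2 t (\<i> / 2 * (w1 - w2))) \<tau> z1 z2)"

end

(* Each summand of H(phi1, phi2) is the slash by a unit of
   psi(tau, z1, z2) = phi1(tau, (z1 + z2)/2) * phi2(tau, i(z1 - z2)/2).
   Since ((z1 + z2)/2)^2 + (i(z1 - z2)/2)^2 = z1 z2, the automorphy factors of phi1 and phi2
   multiply to the Hermitian one, and a translation by lambda = p + iq in Z[i] acts on the two
   arguments as integer translations by p and -q; so psi is a Hermitian Jacobi form of weight
   k1 + k2.  Its Fourier expansion is the product of those of phi1 and phi2, indexed by
   r = (r1 + i r2)/2 with N(r) = (r1^2 + r2^2)/4; on the boundary N(r) = nm this forces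
   r1^2 = 4 n1 m, so cusp forms give cusp forms.  Slashing by units and finite sums preserve
   all of these properties. *)

theory Submission
  imports Defs
begin

lemma e_add: "e x * e y = e (x + y)"
  by (simp add: e_def distrib_left exp_add)

lemma normK_mult: "normK (a * b) = normK a * normK b"
  by (simp add: normK_def)

lemma Re_normK: "Re (normK z) = (Re z)\<^sup>2 + (Im z)\<^sup>2"
  by (simp add: normK_def complex_mult_cnj)

lemma finite_gauss_units: "finite gauss_units"
  by (simp add: gauss_units_def)

lemma gauss_units_nonzero: "\<epsilon> \<in> gauss_units \<Longrightarrow> \<epsilon> \<noteq> 0"
  by (auto simp: gauss_units_def)

lemma gauss_units_cnj_eq_inverse: "\<epsilon> \<in> gauss_units \<Longrightarrow> cnj \<epsilon> = inverse \<epsilon>"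
  by (auto simp: gauss_units_def)

lemma gauss_units_normK: "\<epsilon> \<in> gauss_units \<Longrightarrow> normK \<epsilon> = 1"
  by (auto simp: gauss_units_def normK_def)

lemma gauss_units_cnj: "\<epsilon> \<in> gauss_units \<Longrightarrow> cnj \<epsilon> \<in> gauss_units"
  by (auto simp: gauss_units_def)

lemma gauss_units_subset_gauss_ints: "gauss_units \<subseteq> gauss_ints"
  by (auto simp: gauss_units_def gauss_ints_def)

lemma gauss_ints_mult: "a \<in> gauss_ints \<Longrightarrow> b \<in> gauss_ints \<Longrightarrow> a * b \<in> gauss_ints"
  by (auto simp: gauss_ints_def)

lemma gauss_intsE:
  assumes "l \<in> gauss_ints"
  obtains p q :: int where "l = of_int p + \<i> * of_int q"
proof -
  from assms obtain p q where "Re l = of_int p" "Im l = of_int q"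
    by (auto simp: gauss_ints_def elim!: Ints_cases)
  then have "l = of_int p + \<i> * of_int q"
    by (simp add: complex_eq_iff)
  then show thesis
    using that by blast
qed

lemma OK_sharp_mult: "a \<in> gauss_ints \<Longrightarrow> r \<in> OK_sharp \<Longrightarrow> a * r \<in> OK_sharp"
  by (auto simp: OK_sharp_def intro!: image_eqI gauss_ints_mult)

lemma half_gauss_int_in_OK_sharp: "(of_int r1 + \<i> * of_int r2) / 2 \<in> OK_sharp"
proof -
  have "(of_int r1 + \<i> * of_int r2) / 2 = \<i> / 2 * (of_int r2 - \<i> * of_int r1)"
    by (simp add: complex_eq_iff)
  moreover have "of_int r2 - \<i> * of_int r1 \<in> gauss_ints"
    by (simp add: gauss_ints_def)
  ultimately show ?thesis
    unfolding OK_sharp_def by blast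
qed

lemma has_sum_product:
  fixes f :: "'a \<Rightarrow> complex" and g :: "'b \<Rightarrow> complex"
  assumes f: "(f has_sum a) A" and g: "(g has_sum b) B"
  shows "((\<lambda>(x, y). f x * g y) has_sum a * b) (A \<times> B)"
proof -
  have f_abs: "(\<lambda>x. norm (f x)) summable_on A" and g_abs: "(\<lambda>y. norm (g y)) summable_on B"
    using f g has_sum_imp_summable summable_on_iff_abs_summable_on_complex by blast+
  have "(\<lambda>p. norm ((\<lambda>(x, y). f x * g y) p)) summable_on A \<times> B"
  proof (rule Infinite_Sum.abs_summable_on_Sigma_iff[THEN iffD2], intro conjI ballI)
    show "(\<lambda>y. norm ((\<lambda>(x, y). f x * g y) (x, y))) summable_on B" for x
      using summable_on_cmult_right[OF g_abs, of "norm (f x)"] by (simp add: norm_mult)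
    show "(\<lambda>x. norm (\<Sum>\<^sub>\<infinity>y\<in>B. norm ((\<lambda>(x, y). f x * g y) (x, y)))) summable_on A"
      using summable_on_cmult_left[OF f_abs, of "\<Sum>\<^sub>\<infinity>y\<in>B. norm (g y)"]
      by (simp add: norm_mult infsum_cmult_right' infsum_nonneg)
  qed
  then have "(\<lambda>(x, y). f x * g y) summable_on A \<times> B"
    by (rule abs_summable_summable)
  from has_sum_SigmaI[OF _ has_sum_cmult_left[OF f] this] show ?thesis
    by (simp add: has_sum_cmult_right[OF g])
qed

lemma holomorphic2_iff:
  "holomorphic2 f \<longleftrightarrow> (\<forall>t z. Im t > 0 \<longrightarrow> (\<exists>A B.
     ((\<lambda>p. f (fst p) (snd p)) has_derivative (\<lambda>h. A * fst h + B * snd h)) (at (t, z))))"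
  unfolding holomorphic2_def upper_half_plane_def by (simp add: case_prod_unfold)

lemma holomorphic3_iff:
  "holomorphic3 f \<longleftrightarrow> (\<forall>t z1 z2. Im t > 0 \<longrightarrow> (\<exists>A B C.
     ((\<lambda>p. f (fst p) (fst (snd p)) (snd (snd p))) has_derivative
       (\<lambda>h. A * fst h + B * fst (snd h) + C * snd (snd h))) (at (t, z1, z2))))"
  unfolding holomorphic3_def upper_half_plane_def by (simp add: case_prod_unfold)

lemma has_derivative_compose_pair:
  assumes "((\<lambda>p. f (fst p) (snd p)) has_derivative (\<lambda>h. A * fst h + B * snd h)) (at (g1 x, g2 x))"
    and "(g1 has_derivative g1') (at x)" "(g2 has_derivative g2') (at x)"
  shows "((\<lambda>y. f (g1 y) (g2 y)) has_derivative (\<lambda>h. A * g1' h + B * g2' h)) (at x)"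
  using has_derivative_compose[OF has_derivative_Pair[OF assms(2,3)] assms(1)] by simp

definition herm_modular_invariant ::
  "nat \<Rightarrow> nat \<Rightarrow> (complex \<Rightarrow> complex \<Rightarrow> complex \<Rightarrow> complex) \<Rightarrow> bool" where
  "herm_modular_invariant k m \<psi> \<longleftrightarrow>
     (\<forall>a b c d. a * d - b * c = 1 \<longrightarrow>
        (\<forall>\<tau> \<in> upper_half_plane. \<forall>z1 z2. slash_herm k m a b c d \<psi> \<tau> z1 z2 = \<psi> \<tau> z1 z2))"

definition herm_translate ::
  "nat \<Rightarrow> complex \<Rightarrow> complex \<Rightarrow> (complex \<Rightarrow> complex \<Rightarrow> complex \<Rightarrow> complex)
     \<Rightarrow> complex \<Rightarrow> complex \<Rightarrow> complex \<Rightarrow> complex" where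
  "herm_translate m l u \<psi> \<tau> z1 z2 =
     e (of_nat m * (normK l * \<tau> + cnj l * z1 + l * z2))
       * \<psi> \<tau> (z1 + l * \<tau> + u) (z2 + cnj l * \<tau> + cnj u)"

definition herm_translation_invariant ::
  "nat \<Rightarrow> (complex \<Rightarrow> complex \<Rightarrow> complex \<Rightarrow> complex) \<Rightarrow> bool" where
  "herm_translation_invariant m \<psi> \<longleftrightarrow>
     (\<forall>l \<in> gauss_ints. \<forall>u \<in> gauss_ints. \<forall>\<tau> \<in> upper_half_plane. \<forall>z1 z2.
        herm_translate m l u \<psi> \<tau> z1 z2 = \<psi> \<tau> z1 z2)"

definition herm_cuspidal :: "nat \<Rightarrow> (complex \<Rightarrow> complex \<Rightarrow> complex \<Rightarrow> complex) \<Rightarrow> bool" where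
  "herm_cuspidal m \<psi> \<longleftrightarrow>
     (\<exists>c. fourier_herm m c \<psi> \<and> (\<forall>n r. Re (normK r) = real (n * m) \<longrightarrow> c (n, r) = 0))"

definition herm_support :: "nat \<Rightarrow> (nat \<times> complex) set" where
  "herm_support m = {(n, r). r \<in> OK_sharp \<and> Re (normK r) \<le> real (n * m)}"

lemma herm_jacobi_form_iff:
  "herm_jacobi_form k m \<psi> \<longleftrightarrow>
     holomorphic3 \<psi> \<and> herm_modular_invariant k m \<psi> \<and> herm_translation_invariant m \<psi>
       \<and> (\<exists>c. fourier_herm m c \<psi>)"
  unfolding herm_jacobi_form_def herm_modular_invariant_def herm_translation_invariant_def
    herm_translate_def by blast

lemma herm_jacobi_cusp_form_iff:
  "herm_jacobi_cusp_form k m \<psi> \<longleftrightarrow> herm_jacobi_form k m \<psi> \<and> herm_cuspidal m \<psi>"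
  unfolding herm_jacobi_cusp_form_def herm_cuspidal_def by blast

lemma holomorphic3_add:
  assumes "holomorphic3 f" "holomorphic3 g"
  shows "holomorphic3 (\<lambda>\<tau> z1 z2. f \<tau> z1 z2 + g \<tau> z1 z2)"
  unfolding holomorphic3_iff
proof (intro allI impI)
  fix t z1 z2 :: complex
  assume "Im t > 0"
  then obtain A B C A' B' C' where
    "((\<lambda>p. f (fst p) (fst (snd p)) (snd (snd p))) has_derivative
       (\<lambda>h. A * fst h + B * fst (snd h) + C * snd (snd h))) (at (t, z1, z2))"
    "((\<lambda>p. g (fst p) (fst (snd p)) (snd (snd p))) has_derivative
       (\<lambda>h. A' * fst h + B' * fst (snd h) + C' * snd (snd h))) (at (t, z1, z2))"
    using assms unfolding holomorphic3_iff by meson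
  from has_derivative_add[OF this] have
    "((\<lambda>p. f (fst p) (fst (snd p)) (snd (snd p)) + g (fst p) (fst (snd p)) (snd (snd p)))
       has_derivative (\<lambda>h. (A + A') * fst h + (B + B') * fst (snd h) + (C + C') * snd (snd h)))
       (at (t, z1, z2))"
    by (rule has_derivative_eq_rhs) (simp add: fun_eq_iff algebra_simps)
  then show "\<exists>A B C. ((\<lambda>p. f (fst p) (fst (snd p)) (snd (snd p)) + g (fst p) (fst (snd p)) (snd (snd p)))
       has_derivative (\<lambda>h. A * fst h + B * fst (snd h) + C * snd (snd h))) (at (t, z1, z2))"
    by blast
qed

lemma fourier_herm_add:
  "fourier_herm m c f \<Longrightarrow> fourier_herm m c' g \<Longrightarrow>
     fourier_herm m (\<lambda>x. c x + c' x) (\<lambda>\<tau> z1 z2. f \<tau> z1 z2 + g \<tau> z1 z2)"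
  unfolding fourier_herm_def by (auto simp: case_prod_unfold distrib_right intro!: has_sum_add)

lemma herm_jacobi_form_zero: "herm_jacobi_form k m (\<lambda>\<tau> z1 z2. 0)"
proof -
  have "((\<lambda>p. 0) has_derivative (\<lambda>h. 0 * fst h + 0 * fst (snd h) + 0 * snd (snd h))) (at p)"
    for p :: "complex \<times> complex \<times> complex"
    by (rule has_derivative_eq_rhs[OF has_derivative_const]) simp
  then have "holomorphic3 (\<lambda>\<tau> z1 z2. 0)"
    unfolding holomorphic3_iff by blast
  moreover have "fourier_herm m (\<lambda>_. 0) (\<lambda>\<tau> z1 z2. 0)"
    unfolding fourier_herm_def by (simp add: case_prod_unfold)
  moreover have "herm_modular_invariant k m (\<lambda>\<tau> z1 z2. 0)"
    by (simp add: herm_modular_invariant_def slash_herm_def)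
  moreover have "herm_translation_invariant m (\<lambda>\<tau> z1 z2. 0)"
    by (simp add: herm_translation_invariant_def herm_translate_def)
  ultimately show ?thesis
    unfolding herm_jacobi_form_iff by blast
qed

lemma herm_jacobi_form_add:
  assumes "herm_jacobi_form k m f" "herm_jacobi_form k m g"
  shows "herm_jacobi_form k m (\<lambda>\<tau> z1 z2. f \<tau> z1 z2 + g \<tau> z1 z2)"
proof -
  have "herm_modular_invariant k m (\<lambda>\<tau> z1 z2. f \<tau> z1 z2 + g \<tau> z1 z2)"
    using assms unfolding herm_jacobi_form_iff herm_modular_invariant_def slash_herm_def
    by (simp add: distrib_left)
  moreover have "herm_translation_invariant m (\<lambda>\<tau> z1 z2. f \<tau> z1 z2 + g \<tau> z1 z2)"
    using assms unfolding herm_jacobi_form_iff herm_translation_invariant_def herm_translate_def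
    by (simp add: distrib_left)
  ultimately show ?thesis
    using assms holomorphic3_add fourier_herm_add unfolding herm_jacobi_form_iff by blast
qed

lemma herm_jacobi_cusp_form_zero: "herm_jacobi_cusp_form k m (\<lambda>\<tau> z1 z2. 0)"
proof -
  have "fourier_herm m (\<lambda>_. 0) (\<lambda>\<tau> z1 z2. 0)"
    unfolding fourier_herm_def by (simp add: case_prod_unfold)
  then show ?thesis
    unfolding herm_jacobi_cusp_form_iff herm_cuspidal_def using herm_jacobi_form_zero by blast
qed

lemma herm_jacobi_cusp_form_add:
  assumes "herm_jacobi_cusp_form k m f" "herm_jacobi_cusp_form k m g"
  shows "herm_jacobi_cusp_form k m (\<lambda>\<tau> z1 z2. f \<tau> z1 z2 + g \<tau> z1 z2)"
proof -
  obtain c c' where "fourier_herm m c f" "fourier_herm m c' g"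
    and "\<forall>n r. Re (normK r) = real (n * m) \<longrightarrow> c (n, r) = 0 \<and> c' (n, r) = 0"
    using assms unfolding herm_jacobi_cusp_form_iff herm_cuspidal_def by blast
  then have "herm_cuspidal m (\<lambda>\<tau> z1 z2. f \<tau> z1 z2 + g \<tau> z1 z2)"
    unfolding herm_cuspidal_def using fourier_herm_add[of m c f c' g] by auto
  then show ?thesis
    using assms herm_jacobi_form_add unfolding herm_jacobi_cusp_form_iff by blast
qed

lemma finite_sum_closed3:
  assumes "P (\<lambda>\<tau> z1 z2. 0)"
    and "\<And>f g. P f \<Longrightarrow> P g \<Longrightarrow> P (\<lambda>\<tau> z1 z2. f \<tau> z1 z2 + g \<tau> z1 z2)"
    and "finite E" "\<And>\<epsilon>. \<epsilon> \<in> E \<Longrightarrow> P (F \<epsilon>)"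
  shows "P (\<lambda>\<tau> z1 z2. \<Sum>\<epsilon>\<in>E. F \<epsilon> \<tau> z1 z2)"
  using assms(3,4)
proof (induction E rule: finite_induct)
  case empty
  then show ?case
    using assms(1) by simp
next
  case (insert x E)
  then show ?case
    using assms(2)[of "F x" "\<lambda>\<tau> z1 z2. \<Sum>\<epsilon>\<in>E. F \<epsilon> \<tau> z1 z2"] by simp
qed

lemma holomorphic3_slash_unit:
  assumes "holomorphic3 \<psi>"
  shows "holomorphic3 (slash_unit k \<epsilon> \<psi>)"
  unfolding holomorphic3_iff
proof (intro allI impI)
  fix t z1 z2 :: complex
  assume "Im t > 0"
  then obtain A B C where \<psi>_deriv:
    "((\<lambda>p. \<psi> (fst p) (fst (snd p)) (snd (snd p))) has_derivative
       (\<lambda>h. A * fst h + B * fst (snd h) + C * snd (snd h))) (at (t, \<epsilon> * z1, cnj \<epsilon> * z2))"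
    using assms unfolding holomorphic3_iff by blast
  let ?g = "\<lambda>p :: complex \<times> complex \<times> complex. (fst p, \<epsilon> * fst (snd p), cnj \<epsilon> * snd (snd p))"
  have "(?g has_derivative ?g) (at (t, z1, z2))"
    by (intro derivative_eq_intros) auto
  from has_derivative_compose[OF this, of "\<lambda>p. \<psi> (fst p) (fst (snd p)) (snd (snd p))"
      "\<lambda>h. A * fst h + B * fst (snd h) + C * snd (snd h)"] \<psi>_deriv
  have "((\<lambda>p. \<psi> (fst p) (\<epsilon> * fst (snd p)) (cnj \<epsilon> * snd (snd p))) has_derivative
     (\<lambda>h. A * fst h + B * (\<epsilon> * fst (snd h)) + C * (cnj \<epsilon> * snd (snd h)))) (at (t, z1, z2))"
    by simp
  from has_derivative_mult_right[OF this, of "inverse (\<epsilon> ^ k)"]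
  have "((\<lambda>p. slash_unit k \<epsilon> \<psi> (fst p) (fst (snd p)) (snd (snd p))) has_derivative
     (\<lambda>h. (inverse (\<epsilon> ^ k) * A) * fst h + (inverse (\<epsilon> ^ k) * B * \<epsilon>) * fst (snd h)
         + (inverse (\<epsilon> ^ k) * C * cnj \<epsilon>) * snd (snd h))) (at (t, z1, z2))"
    unfolding slash_unit_def by (rule has_derivative_eq_rhs) (simp add: fun_eq_iff algebra_simps)
  then show "\<exists>A B C. ((\<lambda>p. slash_unit k \<epsilon> \<psi> (fst p) (fst (snd p)) (snd (snd p))) has_derivative
     (\<lambda>h. A * fst h + B * fst (snd h) + C * snd (snd h))) (at (t, z1, z2))"
    by blast
qed

lemma slash_herm_slash_unit:
  assumes "\<epsilon> \<in> gauss_units"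
  shows "slash_herm k m a b c d (slash_unit k' \<epsilon> \<psi>) \<tau> z1 z2
       = slash_unit k' \<epsilon> (slash_herm k m a b c d \<psi>) \<tau> z1 z2"
  using gauss_units_nonzero[OF assms]
  by (simp add: slash_herm_def slash_unit_def gauss_units_cnj_eq_inverse[OF assms] field_simps)

lemma herm_translate_slash_unit:
  assumes "\<epsilon> \<in> gauss_units"
  shows "herm_translate m l u (slash_unit k \<epsilon> \<psi>) \<tau> z1 z2
       = slash_unit k \<epsilon> (herm_translate m (\<epsilon> * l) (\<epsilon> * u) \<psi>) \<tau> z1 z2"
  using gauss_units_nonzero[OF assms]
  by (simp add: herm_translate_def slash_unit_def normK_mult gauss_units_normK[OF assms]
      gauss_units_cnj_eq_inverse[OF assms] field_simps)

lemma fourier_herm_slash_unit: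
  assumes \<epsilon>: "\<epsilon> \<in> gauss_units" and \<psi>: "fourier_herm m c \<psi>"
  shows "fourier_herm m (\<lambda>(n, r). inverse (\<epsilon> ^ k) * c (n, cnj \<epsilon> * r)) (slash_unit k \<epsilon> \<psi>)"
  unfolding fourier_herm_def herm_support_def[symmetric]
proof (intro ballI allI)
  fix \<tau> z1 z2
  assume "\<tau> \<in> upper_half_plane"
  have \<epsilon>_inv: "\<epsilon> \<noteq> 0" "cnj \<epsilon> = inverse \<epsilon>"
    using \<epsilon> by (simp_all add: gauss_units_nonzero gauss_units_cnj_eq_inverse)
  have "normK \<epsilon> = 1" "normK (cnj \<epsilon>) = 1" "\<epsilon> \<in> gauss_ints" "cnj \<epsilon> \<in> gauss_ints"
    using \<epsilon> gauss_units_cnj gauss_units_subset_gauss_ints gauss_units_normK by auto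
  then have support: "(n, \<epsilon> * r) \<in> herm_support m" "(n, cnj \<epsilon> * r) \<in> herm_support m"
    if "(n, r) \<in> herm_support m" for n r
    using that by (auto simp: herm_support_def OK_sharp_mult normK_mult)
  have cancel: "cnj \<epsilon> * r * (\<epsilon> * z1) = r * z1" "cnj (cnj \<epsilon> * r) * (cnj \<epsilon> * z2) = cnj r * z2" for r
    using \<epsilon>_inv by (simp_all add: field_simps)
  from \<psi> \<open>\<tau> \<in> upper_half_plane\<close> have "((\<lambda>(n, r). c (n, r) * e (of_nat n * \<tau> + r * (\<epsilon> * z1) + cnj r * (cnj \<epsilon> * z2)))
      has_sum \<psi> \<tau> (\<epsilon> * z1) (cnj \<epsilon> * z2)) (herm_support m)"
    unfolding fourier_herm_def herm_support_def by blast
  from has_sum_cmult_right[OF this, of "inverse (\<epsilon> ^ k)"]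
  have scaled: "((\<lambda>(n, r). inverse (\<epsilon> ^ k) * (c (n, r) * e (of_nat n * \<tau> + r * (\<epsilon> * z1) + cnj r * (cnj \<epsilon> * z2))))
      has_sum slash_unit k \<epsilon> \<psi> \<tau> z1 z2) (herm_support m)"
    by (simp add: slash_unit_def case_prod_unfold)
  show "((\<lambda>(n, r). (\<lambda>(n, r). inverse (\<epsilon> ^ k) * c (n, cnj \<epsilon> * r)) (n, r)
      * e (of_nat n * \<tau> + r * z1 + cnj r * z2)) has_sum slash_unit k \<epsilon> \<psi> \<tau> z1 z2) (herm_support m)"
  proof (rule has_sum_reindex_bij_witness[where j = "\<lambda>(n, r). (n, cnj \<epsilon> * r)"
        and i = "\<lambda>(n, r). (n, \<epsilon> * r)", THEN iffD2])
    show "(\<lambda>(n, r). inverse (\<epsilon> ^ k) * (c (n, r) * e (of_nat n * \<tau> + r * (\<epsilon> * z1) + cnj r * (cnj \<epsilon> * z2))))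
        ((\<lambda>(n, r). (n, cnj \<epsilon> * r)) p)
      = (\<lambda>(n, r). (\<lambda>(n, r). inverse (\<epsilon> ^ k) * c (n, cnj \<epsilon> * r)) (n, r)
          * e (of_nat n * \<tau> + r * z1 + cnj r * z2)) p" for p
      unfolding case_prod_unfold fst_conv snd_conv cancel by (simp only: mult.assoc)
  qed (use scaled \<epsilon>_inv support in auto)
qed

lemma herm_jacobi_form_slash_unit:
  assumes \<epsilon>: "\<epsilon> \<in> gauss_units" and \<psi>: "herm_jacobi_form k m \<psi>"
  shows "herm_jacobi_form k m (slash_unit k \<epsilon> \<psi>)"
proof -
  have "herm_modular_invariant k m (slash_unit k \<epsilon> \<psi>)"
    unfolding herm_modular_invariant_def
  proof (intro allI impI ballI)
    fix a b c d :: int and \<tau> z1 z2 :: complex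
    assume "a * d - b * c = 1" "\<tau> \<in> upper_half_plane"
    with \<psi> have "slash_herm k m a b c d \<psi> \<tau> z1' z2' = \<psi> \<tau> z1' z2'" for z1' z2'
      unfolding herm_jacobi_form_iff herm_modular_invariant_def by blast
    then show "slash_herm k m a b c d (slash_unit k \<epsilon> \<psi>) \<tau> z1 z2 = slash_unit k \<epsilon> \<psi> \<tau> z1 z2"
      by (simp only: slash_herm_slash_unit[OF \<epsilon>] slash_unit_def)
  qed
  moreover have "herm_translation_invariant m (slash_unit k \<epsilon> \<psi>)"
    unfolding herm_translation_invariant_def
  proof (intro ballI allI)
    fix l u \<tau> z1 z2
    assume "l \<in> gauss_ints" "u \<in> gauss_ints" "\<tau> \<in> upper_half_plane"
    moreover have "\<epsilon> \<in> gauss_ints"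
      using \<epsilon> gauss_units_subset_gauss_ints by blast
    ultimately have "herm_translate m (\<epsilon> * l) (\<epsilon> * u) \<psi> \<tau> z1' z2' = \<psi> \<tau> z1' z2'" for z1' z2'
      using \<psi> gauss_ints_mult unfolding herm_jacobi_form_iff herm_translation_invariant_def by blast
    then show "herm_translate m l u (slash_unit k \<epsilon> \<psi>) \<tau> z1 z2 = slash_unit k \<epsilon> \<psi> \<tau> z1 z2"
      by (simp only: herm_translate_slash_unit[OF \<epsilon>] slash_unit_def)
  qed
  ultimately show ?thesis
    using \<psi> holomorphic3_slash_unit fourier_herm_slash_unit[OF \<epsilon>]
    unfolding herm_jacobi_form_iff by blast
qed

lemma herm_jacobi_cusp_form_slash_unit:
  assumes \<epsilon>: "\<epsilon> \<in> gauss_units" and \<psi>: "herm_jacobi_cusp_form k m \<psi>"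
  shows "herm_jacobi_cusp_form k m (slash_unit k \<epsilon> \<psi>)"
proof -
  obtain c where c: "fourier_herm m c \<psi>"
    and c_cusp: "\<And>n r. Re (normK r) = real (n * m) \<Longrightarrow> c (n, r) = 0"
    using \<psi> unfolding herm_jacobi_cusp_form_iff herm_cuspidal_def by blast
  have "herm_cuspidal m (slash_unit k \<epsilon> \<psi>)"
    unfolding herm_cuspidal_def
  proof (intro exI conjI allI impI)
    show "fourier_herm m (\<lambda>(n, r). inverse (\<epsilon> ^ k) * c (n, cnj \<epsilon> * r)) (slash_unit k \<epsilon> \<psi>)"
      by (rule fourier_herm_slash_unit[OF \<epsilon> c])
    fix n r
    assume "Re (normK r) = real (n * m)"
    moreover have "normK (cnj \<epsilon> * r) = normK r"
      using \<epsilon> gauss_units_cnj gauss_units_normK by (simp add: normK_mult)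
    ultimately show "(\<lambda>(n, r). inverse (\<epsilon> ^ k) * c (n, cnj \<epsilon> * r)) (n, r) = 0"
      using c_cusp[of "cnj \<epsilon> * r" n] by simp
  qed
  then show ?thesis
    using \<psi> herm_jacobi_form_slash_unit[OF \<epsilon>] unfolding herm_jacobi_cusp_form_iff by blast
qed

definition jacobi_tensor ::
  "(complex \<Rightarrow> complex \<Rightarrow> complex) \<Rightarrow> (complex \<Rightarrow> complex \<Rightarrow> complex)
     \<Rightarrow> complex \<Rightarrow> complex \<Rightarrow> complex \<Rightarrow> complex" where
  "jacobi_tensor \<phi>1 \<phi>2 \<tau> z1 z2 = \<phi>1 \<tau> ((z1 + z2) / 2) * \<phi>2 \<tau> (\<i> / 2 * (z1 - z2))"

lemma H_lift_eq_sum_slash_unit: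
  "H_lift k \<phi>1 \<phi>2 = (\<lambda>\<tau> z1 z2. \<Sum>\<epsilon>\<in>gauss_units. slash_unit k \<epsilon> (jacobi_tensor \<phi>1 \<phi>2) \<tau> z1 z2)"
  by (simp add: fun_eq_iff H_lift_def jacobi_tensor_def[abs_def])

lemma holomorphic3_jacobi_tensor:
  assumes "holomorphic2 \<phi>1" "holomorphic2 \<phi>2"
  shows "holomorphic3 (jacobi_tensor \<phi>1 \<phi>2)"
  unfolding holomorphic3_iff
proof (intro allI impI)
  fix t z1 z2 :: complex
  assume "Im t > 0"
  then obtain A1 B1 A2 B2 where \<phi>1_deriv:
    "((\<lambda>p. \<phi>1 (fst p) (snd p)) has_derivative (\<lambda>h. A1 * fst h + B1 * snd h)) (at (t, (z1 + z2) / 2))"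
    and \<phi>2_deriv: "((\<lambda>p. \<phi>2 (fst p) (snd p)) has_derivative (\<lambda>h. A2 * fst h + B2 * snd h))
       (at (t, \<i> / 2 * (z1 - z2)))"
    using assms unfolding holomorphic2_iff by meson
  have fst_deriv: "(fst has_derivative fst) (at (t, z1, z2))"
    and sum_deriv: "((\<lambda>p. (fst (snd p) + snd (snd p)) / 2) has_derivative
      (\<lambda>h. (fst (snd h) + snd (snd h)) / 2)) (at (t, z1, z2))"
    and diff_deriv: "((\<lambda>p. \<i> / 2 * (fst (snd p) - snd (snd p))) has_derivative
      (\<lambda>h. \<i> / 2 * (fst (snd h) - snd (snd h)))) (at (t, z1, z2))"
    by (auto intro!: derivative_eq_intros)
  have "((\<lambda>p. \<phi>1 (fst p) ((fst (snd p) + snd (snd p)) / 2)) has_derivative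
       (\<lambda>h. A1 * fst h + B1 * ((fst (snd h) + snd (snd h)) / 2))) (at (t, z1, z2))"
    by (rule has_derivative_compose_pair[OF _ fst_deriv sum_deriv]) (use \<phi>1_deriv in simp)
  moreover have "((\<lambda>p. \<phi>2 (fst p) (\<i> / 2 * (fst (snd p) - snd (snd p)))) has_derivative
       (\<lambda>h. A2 * fst h + B2 * (\<i> / 2 * (fst (snd h) - snd (snd h))))) (at (t, z1, z2))"
    by (rule has_derivative_compose_pair[OF _ fst_deriv diff_deriv]) (use \<phi>2_deriv in simp)
  ultimately have "((\<lambda>p. jacobi_tensor \<phi>1 \<phi>2 (fst p) (fst (snd p)) (snd (snd p))) has_derivative
    (\<lambda>h. (\<phi>1 t ((z1 + z2) / 2) * A2 + A1 * \<phi>2 t (\<i> / 2 * (z1 - z2))) * fst h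
      + (\<phi>1 t ((z1 + z2) / 2) * B2 * \<i> / 2 + B1 / 2 * \<phi>2 t (\<i> / 2 * (z1 - z2))) * fst (snd h)
      + (- \<phi>1 t ((z1 + z2) / 2) * B2 * \<i> / 2 + B1 / 2 * \<phi>2 t (\<i> / 2 * (z1 - z2))) * snd (snd h)))
    (at (t, z1, z2))"
    unfolding jacobi_tensor_def
    by (rule has_derivative_eq_rhs[OF has_derivative_mult]) (simp add: fun_eq_iff field_simps)
  then show "\<exists>A B C. ((\<lambda>p. jacobi_tensor \<phi>1 \<phi>2 (fst p) (fst (snd p)) (snd (snd p))) has_derivative
      (\<lambda>h. A * fst h + B * fst (snd h) + C * snd (snd h))) (at (t, z1, z2))"
    by blast
qed

lemma sum_squares_tensor_variables: "((z1 + z2) / 2)\<^sup>2 + (\<i> / 2 * (z1 - z2))\<^sup>2 = z1 * z2"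
  by (simp add: power2_eq_square field_simps)

lemma slash_herm_jacobi_tensor:
  "slash_herm (k1 + k2) m a b c d (jacobi_tensor \<phi>1 \<phi>2) \<tau> z1 z2
     = slash_classical k1 m a b c d \<phi>1 \<tau> ((z1 + z2) / 2)
       * slash_classical k2 m a b c d \<phi>2 \<tau> (\<i> / 2 * (z1 - z2))"
proof -
  define D where "D = of_int c * \<tau> + of_int d"
  define M where "M = (of_int a * \<tau> + of_int b) / D"
  define A where "A = (z1 + z2) / 2"
  define B where "B = \<i> / 2 * (z1 - z2)"
  have "A\<^sup>2 + B\<^sup>2 = z1 * z2"
    unfolding A_def B_def by (rule sum_squares_tensor_variables)
  then have "- of_nat m * of_int c * z1 * z2 / D
      = - of_nat m * of_int c * A\<^sup>2 / D + - of_nat m * of_int c * B\<^sup>2 / D"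
    by (metis add_divide_distrib distrib_left mult.assoc mult_minus_left)
  then have exp_split: "e (- of_nat m * of_int c * z1 * z2 / D)
      = e (- of_nat m * of_int c * A\<^sup>2 / D) * e (- of_nat m * of_int c * B\<^sup>2 / D)"
    by (simp only: e_add)
  have args: "(z1 / D + z2 / D) / 2 = A / D" "\<i> / 2 * (z1 / D - z2 / D) = B / D"
    unfolding A_def B_def by (simp_all add: add_divide_distrib diff_divide_distrib algebra_simps)
  have "slash_herm (k1 + k2) m a b c d (jacobi_tensor \<phi>1 \<phi>2) \<tau> z1 z2
      = inverse (D ^ (k1 + k2)) * e (- of_nat m * of_int c * z1 * z2 / D) * (\<phi>1 M (A / D) * \<phi>2 M (B / D))"
    unfolding slash_herm_def jacobi_tensor_def D_def[symmetric] M_def[symmetric] args ..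
  also have "\<dots> = (inverse (D ^ k1) * e (- of_nat m * of_int c * A\<^sup>2 / D) * \<phi>1 M (A / D))
      * (inverse (D ^ k2) * e (- of_nat m * of_int c * B\<^sup>2 / D) * \<phi>2 M (B / D))"
    unfolding exp_split power_add inverse_mult_distrib by (simp only: mult_ac)
  also have "\<dots> = slash_classical k1 m a b c d \<phi>1 \<tau> A * slash_classical k2 m a b c d \<phi>2 \<tau> B"
    unfolding slash_classical_def D_def M_def ..
  finally show ?thesis
    unfolding A_def B_def .
qed

definition jacobi_translate ::
  "nat \<Rightarrow> int \<Rightarrow> int \<Rightarrow> (complex \<Rightarrow> complex \<Rightarrow> complex) \<Rightarrow> complex \<Rightarrow> complex \<Rightarrow> complex" where
  "jacobi_translate m l u \<phi> \<tau> z =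
     e (of_nat m * (of_int (l ^ 2) * \<tau> + 2 * of_int l * z)) * \<phi> \<tau> (z + of_int l * \<tau> + of_int u)"

lemma herm_translate_jacobi_tensor:
  "herm_translate m (of_int p + \<i> * of_int q) (of_int s + \<i> * of_int v) (jacobi_tensor \<phi>1 \<phi>2) \<tau> z1 z2
     = jacobi_translate m p s \<phi>1 \<tau> ((z1 + z2) / 2)
       * jacobi_translate m (- q) (- v) \<phi>2 \<tau> (\<i> / 2 * (z1 - z2))"
proof -
  define l where "l = of_int p + \<i> * of_int q"
  define u where "u = of_int s + \<i> * of_int v"
  define A where "A = (z1 + z2) / 2"
  define B where "B = \<i> / 2 * (z1 - z2)"
  have arg1: "(z1 + l * \<tau> + u + (z2 + cnj l * \<tau> + cnj u)) / 2 = A + of_int p * \<tau> + of_int s"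
    and arg2: "\<i> / 2 * (z1 + l * \<tau> + u - (z2 + cnj l * \<tau> + cnj u)) = B + of_int (- q) * \<tau> + of_int (- v)"
    unfolding l_def u_def A_def B_def by (simp_all add: complex_eq_iff)
  have "normK l * \<tau> + cnj l * z1 + l * z2
      = (of_int (p\<^sup>2) * \<tau> + 2 * of_int p * A) + (of_int ((- q)\<^sup>2) * \<tau> + 2 * of_int (- q) * B)"
    unfolding l_def A_def B_def normK_def by (simp add: complex_eq_iff power2_eq_square field_simps)
  then have exp_split: "e (of_nat m * (normK l * \<tau> + cnj l * z1 + l * z2))
      = e (of_nat m * (of_int (p\<^sup>2) * \<tau> + 2 * of_int p * A))
        * e (of_nat m * (of_int ((- q)\<^sup>2) * \<tau> + 2 * of_int (- q) * B))"
    by (simp only: e_add distrib_left)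
  show ?thesis
    unfolding herm_translate_def jacobi_translate_def jacobi_tensor_def
      l_def[symmetric] u_def[symmetric] A_def[symmetric] B_def[symmetric] arg1 arg2 exp_split
    by (simp only: mult_ac)
qed

lemma herm_modular_invariant_jacobi_tensor:
  assumes "jacobi_form k1 m \<phi>1" "jacobi_form k2 m \<phi>2"
  shows "herm_modular_invariant (k1 + k2) m (jacobi_tensor \<phi>1 \<phi>2)"
  unfolding herm_modular_invariant_def
proof (intro allI impI ballI)
  fix a b c d :: int and \<tau> z1 z2 :: complex
  assume "a * d - b * c = 1" "\<tau> \<in> upper_half_plane"
  then have "slash_classical k1 m a b c d \<phi>1 \<tau> w = \<phi>1 \<tau> w"
    and "slash_classical k2 m a b c d \<phi>2 \<tau> w = \<phi>2 \<tau> w" for w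
    using assms unfolding jacobi_form_def by blast+
  then show "slash_herm (k1 + k2) m a b c d (jacobi_tensor \<phi>1 \<phi>2) \<tau> z1 z2
      = jacobi_tensor \<phi>1 \<phi>2 \<tau> z1 z2"
    by (simp only: slash_herm_jacobi_tensor jacobi_tensor_def)
qed

lemma herm_translation_invariant_jacobi_tensor:
  assumes "jacobi_form k1 m \<phi>1" "jacobi_form k2 m \<phi>2"
  shows "herm_translation_invariant m (jacobi_tensor \<phi>1 \<phi>2)"
  unfolding herm_translation_invariant_def
proof (intro ballI allI)
  fix l u \<tau> z1 z2
  assume "l \<in> gauss_ints" "u \<in> gauss_ints" "\<tau> \<in> upper_half_plane"
  obtain p q s v :: int where l: "l = of_int p + \<i> * of_int q" and u: "u = of_int s + \<i> * of_int v"
    using \<open>l \<in> gauss_ints\<close> \<open>u \<in> gauss_ints\<close> by (metis gauss_intsE)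
  have "jacobi_translate m p s \<phi>1 \<tau> w = \<phi>1 \<tau> w"
    and "jacobi_translate m (- q) (- v) \<phi>2 \<tau> w = \<phi>2 \<tau> w" for w
    using assms \<open>\<tau> \<in> upper_half_plane\<close> unfolding jacobi_form_def jacobi_translate_def by blast+
  then show "herm_translate m l u (jacobi_tensor \<phi>1 \<phi>2) \<tau> z1 z2 = jacobi_tensor \<phi>1 \<phi>2 \<tau> z1 z2"
    unfolding l u by (simp only: herm_translate_jacobi_tensor jacobi_tensor_def)
qed

definition classical_support :: "nat \<Rightarrow> (nat \<times> int) set" where
  "classical_support m = {(n, r). r\<^sup>2 \<le> 4 * int n * int m}"

(* With w1 = (z1 + z2)/2 and w2 = i(z1 - z2)/2 one has r1 w1 + r2 w2 = r z1 + cnj r z2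
   for r = (r1 + i r2)/2. *)
fun pair_index :: "(nat \<times> int) \<times> (nat \<times> int) \<Rightarrow> nat \<times> complex" where
  "pair_index ((n1, r1), (n2, r2)) = (n1 + n2, (of_int r1 + \<i> * of_int r2) / 2)"

definition pair_fibre :: "nat \<Rightarrow> nat \<times> complex \<Rightarrow> ((nat \<times> int) \<times> (nat \<times> int)) set" where
  "pair_fibre m q = {p \<in> classical_support m \<times> classical_support m. pair_index p = q}"

definition tensor_coeff ::
  "(nat \<times> int \<Rightarrow> complex) \<Rightarrow> (nat \<times> int \<Rightarrow> complex) \<Rightarrow> nat \<Rightarrow> nat \<times> complex \<Rightarrow> complex" where
  "tensor_coeff c1 c2 m q = (\<Sum>p\<in>pair_fibre m q. c1 (fst p) * c2 (snd p))"

lemma classical_support_real: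
  assumes "(n, r) \<in> classical_support m"
  shows "(real_of_int r)\<^sup>2 \<le> 4 * real n * real m"
proof -
  have "real_of_int (r\<^sup>2) \<le> real_of_int (4 * int n * int m)"
    using assms unfolding classical_support_def by (simp only: mem_Collect_eq prod.case of_int_le_iff)
  then show ?thesis
    by simp
qed

lemma Re_normK_half_gauss_int:
  "Re (normK ((of_int r1 + \<i> * of_int r2) / 2)) = ((real_of_int r1)\<^sup>2 + (real_of_int r2)\<^sup>2) / 4"
  by (simp add: Re_normK power_divide)

lemma finite_pair_fibre: "finite (pair_fibre m q)"
proof -
  obtain n r where q: "q = (n, r)"
    by fastforce
  have "pair_fibre m q \<subseteq> (\<lambda>j. ((j, \<lfloor>2 * Re r\<rfloor>), (n - j, \<lfloor>2 * Im r\<rfloor>))) ` {..n}"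
  proof
    fix p
    assume "p \<in> pair_fibre m q"
    moreover obtain n1 r1 n2 r2 where p: "p = ((n1, r1), (n2, r2))"
      by (metis prod.collapse)
    ultimately have n: "n1 + n2 = n" and r: "(of_int r1 + \<i> * of_int r2) / 2 = r"
      unfolding pair_fibre_def q by auto
    have "\<lfloor>2 * Re r\<rfloor> = r1" "\<lfloor>2 * Im r\<rfloor> = r2"
      unfolding r[symmetric] by simp_all
    with n show "p \<in> (\<lambda>j. ((j, \<lfloor>2 * Re r\<rfloor>), (n - j, \<lfloor>2 * Im r\<rfloor>))) ` {..n}"
      unfolding p by force
  qed
  then show ?thesis
    by (rule finite_subset) simp
qed

lemma pair_index_in_herm_support:
  assumes "p \<in> classical_support m \<times> classical_support m"
  shows "pair_index p \<in> herm_support m"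
proof -
  obtain n1 r1 n2 r2 where p: "p = ((n1, r1), (n2, r2))"
    by (metis prod.collapse)
  have "(real_of_int r1)\<^sup>2 \<le> 4 * real n1 * real m" "(real_of_int r2)\<^sup>2 \<le> 4 * real n2 * real m"
    using assms classical_support_real unfolding p by auto
  then have "Re (normK ((of_int r1 + \<i> * of_int r2) / 2)) \<le> real ((n1 + n2) * m)"
    unfolding Re_normK_half_gauss_int by (simp add: algebra_simps)
  then show ?thesis
    unfolding p herm_support_def by (simp add: half_gauss_int_in_OK_sharp)
qed

lemma fourier_herm_jacobi_tensor:
  assumes f1: "fourier_classical m c1 \<phi>1" and f2: "fourier_classical m c2 \<phi>2"
  shows "fourier_herm m (tensor_coeff c1 c2 m) (jacobi_tensor \<phi>1 \<phi>2)"
  unfolding fourier_herm_def herm_support_def[symmetric]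
proof (intro ballI allI)
  fix \<tau> z1 z2 :: complex
  assume "\<tau> \<in> upper_half_plane"
  define a where "a = (z1 + z2) / 2"
  define b where "b = \<i> / 2 * (z1 - z2)"
  define F1 where "F1 = (\<lambda>(n, r). c1 (n, r) * e (of_nat n * \<tau> + of_int r * a))"
  define F2 where "F2 = (\<lambda>(n, r). c2 (n, r) * e (of_nat n * \<tau> + of_int r * b))"
  define E where "E = (\<lambda>(n::nat, r::complex). e (of_nat n * \<tau> + r * z1 + cnj r * z2))"
  have "(F1 has_sum \<phi>1 \<tau> a) (classical_support m)" "(F2 has_sum \<phi>2 \<tau> b) (classical_support m)"
    using f1 f2 \<open>\<tau> \<in> upper_half_plane\<close>
    unfolding fourier_classical_def F1_def F2_def classical_support_def by blast+
  from has_sum_product[OF this]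
  have prod_sum: "((\<lambda>(x, y). F1 x * F2 y) has_sum jacobi_tensor \<phi>1 \<phi>2 \<tau> z1 z2)
      (classical_support m \<times> classical_support m)"
    unfolding jacobi_tensor_def a_def b_def .
  have term_eq: "F1 (fst p) * F2 (snd p) = c1 (fst p) * c2 (snd p) * E (pair_index p)" for p
  proof -
    obtain n1 r1 n2 r2 where p: "p = ((n1, r1), (n2, r2))"
      by (metis prod.collapse)
    have "of_nat n1 * \<tau> + of_int r1 * a + (of_nat n2 * \<tau> + of_int r2 * b)
        = of_nat (n1 + n2) * \<tau> + (of_int r1 + \<i> * of_int r2) / 2 * z1
          + cnj ((of_int r1 + \<i> * of_int r2) / 2) * z2"
      unfolding a_def b_def by (simp add: field_simps)
    then have "e (of_nat n1 * \<tau> + of_int r1 * a) * e (of_nat n2 * \<tau> + of_int r2 * b)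
        = E (pair_index p)"
      unfolding p E_def e_add by simp
    then show ?thesis
      unfolding p F1_def F2_def by (simp only: prod.case fst_conv snd_conv mult_ac)
  qed
  define h where "h = (\<lambda>p. (pair_index p, p))"
  have inj: "inj_on h (classical_support m \<times> classical_support m)"
    unfolding h_def inj_on_def by simp
  have img: "h ` (classical_support m \<times> classical_support m) = Sigma (herm_support m) (pair_fibre m)"
  proof
    show "h ` (classical_support m \<times> classical_support m) \<subseteq> Sigma (herm_support m) (pair_fibre m)"
      unfolding h_def pair_fibre_def using pair_index_in_herm_support by blast
    show "Sigma (herm_support m) (pair_fibre m) \<subseteq> h ` (classical_support m \<times> classical_support m)"
      unfolding h_def pair_fibre_def by force
  qed
  have "(\<lambda>(q, p). F1 (fst p) * F2 (snd p)) \<circ> h = (\<lambda>(x, y). F1 x * F2 y)"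
    by (auto simp: h_def)
  with prod_sum have "((\<lambda>(q, p). F1 (fst p) * F2 (snd p)) has_sum jacobi_tensor \<phi>1 \<phi>2 \<tau> z1 z2)
      (Sigma (herm_support m) (pair_fibre m))"
    unfolding img[symmetric] has_sum_reindex[OF inj] by (simp only:)
  then have "((\<lambda>q. tensor_coeff c1 c2 m q * E q) has_sum jacobi_tensor \<phi>1 \<phi>2 \<tau> z1 z2) (herm_support m)"
  proof (rule has_sum_SigmaD)
    fix q
    have "(\<Sum>p\<in>pair_fibre m q. F1 (fst p) * F2 (snd p)) = tensor_coeff c1 c2 m q * E q"
      unfolding tensor_coeff_def sum_distrib_right
    proof (rule sum.cong)
      fix p
      assume "p \<in> pair_fibre m q"
      then show "F1 (fst p) * F2 (snd p) = c1 (fst p) * c2 (snd p) * E q"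
        unfolding term_eq pair_fibre_def by simp
    qed simp
    then show "((\<lambda>p. (\<lambda>(q, p). F1 (fst p) * F2 (snd p)) (q, p)) has_sum tensor_coeff c1 c2 m q * E q)
        (pair_fibre m q)"
      by (simp add: has_sum_finiteI finite_pair_fibre)
  qed
  then show "((\<lambda>(n, r). tensor_coeff c1 c2 m (n, r) * e (of_nat n * \<tau> + r * z1 + cnj r * z2))
      has_sum jacobi_tensor \<phi>1 \<phi>2 \<tau> z1 z2) (herm_support m)"
    unfolding E_def by (simp add: case_prod_unfold)
qed

lemma tensor_coeff_eq_0_on_boundary:
  assumes c1: "\<And>n r. 4 * int n * int m = r\<^sup>2 \<Longrightarrow> c1 (n, r) = 0"
    and boundary: "Re (normK r) = real (n * m)"
  shows "tensor_coeff c1 c2 m (n, r) = 0"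
  unfolding tensor_coeff_def
proof (rule sum.neutral, rule ballI)
  fix p
  assume "p \<in> pair_fibre m (n, r)"
  moreover obtain n1 r1 n2 r2 where p: "p = ((n1, r1), (n2, r2))"
    by (metis prod.collapse)
  ultimately have supp: "(n1, r1) \<in> classical_support m" "(n2, r2) \<in> classical_support m"
    and n: "n1 + n2 = n" and r: "(of_int r1 + \<i> * of_int r2) / 2 = r"
    unfolding pair_fibre_def by auto
  have "((real_of_int r1)\<^sup>2 + (real_of_int r2)\<^sup>2) / 4 = real ((n1 + n2) * m)"
    using boundary unfolding n r[symmetric] Re_normK_half_gauss_int .
  with classical_support_real[OF supp(1)] classical_support_real[OF supp(2)]
  have "(real_of_int r1)\<^sup>2 = 4 * real n1 * real m"
    by (simp add: algebra_simps)
  then have "real_of_int (r1\<^sup>2) = real_of_int (4 * int n1 * int m)"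
    by simp
  then have "4 * int n1 * int m = r1\<^sup>2"
    by (simp only: of_int_eq_iff)
  then show "c1 (fst p) * c2 (snd p) = 0"
    unfolding p using c1 by simp
qed

lemma herm_jacobi_form_jacobi_tensor:
  assumes "jacobi_form k1 m \<phi>1" "jacobi_form k2 m \<phi>2"
  shows "herm_jacobi_form (k1 + k2) m (jacobi_tensor \<phi>1 \<phi>2)"
proof -
  have "holomorphic2 \<phi>1" "holomorphic2 \<phi>2"
    and "\<exists>c1. fourier_classical m c1 \<phi>1" "\<exists>c2. fourier_classical m c2 \<phi>2"
    using assms unfolding jacobi_form_def by blast+
  then show ?thesis
    unfolding herm_jacobi_form_iff
    using holomorphic3_jacobi_tensor herm_modular_invariant_jacobi_tensor[OF assms]
      herm_translation_invariant_jacobi_tensor[OF assms] fourier_herm_jacobi_tensor by blast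
qed

lemma herm_jacobi_cusp_form_jacobi_tensor:
  assumes "jacobi_cusp_form k1 m \<phi>1" "jacobi_cusp_form k2 m \<phi>2"
  shows "herm_jacobi_cusp_form (k1 + k2) m (jacobi_tensor \<phi>1 \<phi>2)"
proof -
  obtain c1 c2 where "fourier_classical m c1 \<phi>1" "fourier_classical m c2 \<phi>2"
    and "\<And>n r. 4 * int n * int m = r\<^sup>2 \<Longrightarrow> c1 (n, r) = 0"
    using assms unfolding jacobi_cusp_form_def by blast
  then have "herm_cuspidal m (jacobi_tensor \<phi>1 \<phi>2)"
    unfolding herm_cuspidal_def
    by (intro exI[of _ "tensor_coeff c1 c2 m"] conjI allI impI fourier_herm_jacobi_tensor
        tensor_coeff_eq_0_on_boundary)
  moreover have "herm_jacobi_form (k1 + k2) m (jacobi_tensor \<phi>1 \<phi>2)"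
    using assms herm_jacobi_form_jacobi_tensor unfolding jacobi_cusp_form_def by blast
  ultimately show ?thesis
    unfolding herm_jacobi_cusp_form_iff by blast
qed

theorem proposition4p5:
  fixes k1 k2 m :: nat and \<phi>1 \<phi>2 :: "complex \<Rightarrow> complex \<Rightarrow> complex"
  assumes "k1 > 0" "k2 > 0" "m > 0"
    and "jacobi_form k1 m \<phi>1" "jacobi_form k2 m \<phi>2"
  shows "herm_jacobi_form (k1 + k2) m (H_lift (k1 + k2) \<phi>1 \<phi>2)
         \<and> (jacobi_cusp_form k1 m \<phi>1 \<and> jacobi_cusp_form k2 m \<phi>2 \<longrightarrow>
              herm_jacobi_cusp_form (k1 + k2) m (H_lift (k1 + k2) \<phi>1 \<phi>2))"
proof (intro conjI impI)
  have "herm_jacobi_form (k1 + k2) m (jacobi_tensor \<phi>1 \<phi>2)"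
    using assms(4,5) by (rule herm_jacobi_form_jacobi_tensor)
  then show "herm_jacobi_form (k1 + k2) m (H_lift (k1 + k2) \<phi>1 \<phi>2)"
    unfolding H_lift_eq_sum_slash_unit
    by (intro finite_sum_closed3[where P = "herm_jacobi_form (k1 + k2) m"] finite_gauss_units
        herm_jacobi_form_zero herm_jacobi_form_add herm_jacobi_form_slash_unit)
  assume "jacobi_cusp_form k1 m \<phi>1 \<and> jacobi_cusp_form k2 m \<phi>2"
  then have "herm_jacobi_cusp_form (k1 + k2) m (jacobi_tensor \<phi>1 \<phi>2)"
    using herm_jacobi_cusp_form_jacobi_tensor by blast
  then show "herm_jacobi_cusp_form (k1 + k2) m (H_lift (k1 + k2) \<phi>1 \<phi>2)"
    unfolding H_lift_eq_sum_slash_unit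
    by (intro finite_sum_closed3[where P = "herm_jacobi_cusp_form (k1 + k2) m"] finite_gauss_units
        herm_jacobi_cusp_form_zero herm_jacobi_cusp_form_add herm_jacobi_cusp_form_slash_unit)
qed

end
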